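(* Let $\mathbf{k}$ be a field, $p\ge3$ and $q\ge1$ integers, $S=\mathbf{k}[e_1,\dots,e_{qp}]$ with the graded reverse lexicographic order with $e_1>e_2>\cdots>e_{qp}$. Let $A'$ be the $(2q-1)\times((q-1)+(p-1)q)$ matrix with entries $A'_{i,j}=e_{pi+j-qp}$, where $e_0=1$ and $e_k=0$ for $k<0$ or $k>qp$. Then for every $(2q-1)\times(2q-1)$ submatrix $B$ of $A'$ with $\det B\neq 0$, the leading term of $\det B$ is the antidiagonal term $\operatorname{sgn}(w_0)\prod_{i=1}^{2q-1}B_{i,2q-i}$, where $w_0$ is the permutation $i\mapsto 2q-i$. *)

theory Defs
  imports "Jordan_Normal_Form.Determinant" "Jordan_Normal_Form.DL_Submatrix" "HOL-Library.Poly_Mapping"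
begin

text \<open>The ring
  S = k[e_1,...,e_qp] is the subring generated by the variables 1..qp.\<close>

type_synonym 'k mpoly = "(nat \<Rightarrow>\<^sub>0 nat) \<Rightarrow>\<^sub>0 'k"

definition mvar :: "nat \<Rightarrow> 'k::zero_neq_one mpoly" where
  "mvar k = Poly_Mapping.single (Poly_Mapping.single k 1) 1"

definition evar :: "nat \<Rightarrow> int \<Rightarrow> 'k::{zero_neq_one, semiring_1} mpoly" where
  "evar n k = (if k = 0 then 1 else if k < 0 \<or> k > int n then 0 else mvar (nat k))"

definition total_degree :: "(nat \<Rightarrow>\<^sub>0 nat) \<Rightarrow> nat" where
  "total_degree a = (\<Sum>i\<in>Poly_Mapping.keys a. Poly_Mapping.lookup a i)"

definition grevlex_less :: "(nat \<Rightarrow>\<^sub>0 nat) \<Rightarrow> (nat \<Rightarrow>\<^sub>0 nat) \<Rightarrow> bool" where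
  "grevlex_less a b \<longleftrightarrow> total_degree a < total_degree b \<or>
     (total_degree a = total_degree b \<and> a \<noteq> b \<and>
      (let k = Max {i. Poly_Mapping.lookup a i \<noteq> Poly_Mapping.lookup b i} in Poly_Mapping.lookup b k < Poly_Mapping.lookup a k))"

definition leading_monomial :: "'k::zero mpoly \<Rightarrow> (nat \<Rightarrow>\<^sub>0 nat)" where
  "leading_monomial f = (THE m. m \<in> Poly_Mapping.keys f \<and> (\<forall>m'\<in>Poly_Mapping.keys f. m' \<noteq> m \<longrightarrow> grevlex_less m' m))"

definition leading_term :: "'k::zero mpoly \<Rightarrow> 'k mpoly" where
  "leading_term f = Poly_Mapping.single (leading_monomial f) (Poly_Mapping.lookup f (leading_monomial f))"

text \<open>The matrix A' (0-based indices: entry (i,j) is A'_{i+1,j+1} = e_{p(i+1)+(j+1)-qp}).\<close>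
definition Aprime :: "nat \<Rightarrow> nat \<Rightarrow> 'k::field mpoly mat" where
  "Aprime p q = mat (2*q - 1) ((q - 1) + (p - 1) * q)
     (\<lambda>(i, j). evar (q*p) (int p * int (i+1) + int (j+1) - int q * int p))"

text \<open>The longest permutation w_0 : i \<mapsto> 2q - i on {1..2q-1}, in 0-based form i \<mapsto> 2q-2-i on {0..<2q-1}.\<close>
definition w0 :: "nat \<Rightarrow> nat \<Rightarrow> nat" where
  "w0 q = (\<lambda>i. if i < 2*q - 1 then 2*q - 2 - i else i)"

end

theory Submission
  imports Defs
begin

text \<open>The entry of A' in row i and column j is e_{x(i,j)} with x(i,j) = p i + j - qp strictly
  increasing in both arguments, and this is all that is used (of p \<ge> 3 only p > 0 matters).
  Every nonzero term of the Leibniz expansion of det B is a signed monomial. If the permutation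
  \<sigma> has an ascent i < j, \<sigma> i < \<sigma> j, then exchanging \<sigma> i and \<sigma> j replaces
  e_u e_v by e_u' e_v' with u < u', v' < v: the largest variable e_v disappears (or the degree
  grows, when u = 0), so the monomial becomes larger in grevlex and stays nonzero. Exchanges
  strictly decrease \<Sum> i \<sigma> i, hence terminate at the only permutation without ascent, w_0.
  So the antidiagonal monomial strictly dominates all other terms and cannot cancel.\<close>

lemma grevlex_less_iff:
  "grevlex_less a b \<longleftrightarrow> total_degree a < total_degree b \<or>
     (total_degree a = total_degree b \<and> (\<exists>k. Poly_Mapping.lookup b k < Poly_Mapping.lookup a k \<and>
        (\<forall>i>k. Poly_Mapping.lookup a i = Poly_Mapping.lookup b i)))"
proof -
  let ?D = "{i. Poly_Mapping.lookup a i \<noteq> Poly_Mapping.lookup b i}"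
  have "?D \<subseteq> Poly_Mapping.keys a \<union> Poly_Mapping.keys b"
    by (auto simp: in_keys_iff)
  then have fin: "finite ?D"
    by (rule finite_subset) simp
  have "(a \<noteq> b \<and> Poly_Mapping.lookup b (Max ?D) < Poly_Mapping.lookup a (Max ?D)) \<longleftrightarrow>
     (\<exists>k. Poly_Mapping.lookup b k < Poly_Mapping.lookup a k \<and>
        (\<forall>i>k. Poly_Mapping.lookup a i = Poly_Mapping.lookup b i))"
  proof
    assume "a \<noteq> b \<and> Poly_Mapping.lookup b (Max ?D) < Poly_Mapping.lookup a (Max ?D)"
    moreover have "Poly_Mapping.lookup a i = Poly_Mapping.lookup b i" if "Max ?D < i" for i
      using Max_ge[OF fin, of i] that by fastforce
    ultimately show "\<exists>k. Poly_Mapping.lookup b k < Poly_Mapping.lookup a k \<and>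
        (\<forall>i>k. Poly_Mapping.lookup a i = Poly_Mapping.lookup b i)"
      by blast
  next
    assume "\<exists>k. Poly_Mapping.lookup b k < Poly_Mapping.lookup a k \<and>
        (\<forall>i>k. Poly_Mapping.lookup a i = Poly_Mapping.lookup b i)"
    then obtain k where k: "Poly_Mapping.lookup b k < Poly_Mapping.lookup a k"
      "\<forall>i>k. Poly_Mapping.lookup a i = Poly_Mapping.lookup b i"
      by blast
    have "Max ?D = k"
      using k by (intro Max_eqI[OF fin]) (auto simp: not_le[symmetric])
    with k show "a \<noteq> b \<and> Poly_Mapping.lookup b (Max ?D) < Poly_Mapping.lookup a (Max ?D)"
      by auto
  qed
  then show ?thesis
    unfolding grevlex_less_def Let_def by simp
qed

lemma grevlex_less_irrefl: "\<not> grevlex_less a a"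
  by (simp add: grevlex_less_iff)

lemma grevlex_less_asym:
  assumes "grevlex_less a b"
  shows "\<not> grevlex_less b a"
proof
  assume "grevlex_less b a"
  with assms have "total_degree a = total_degree b"
    by (auto simp: grevlex_less_iff)
  with assms \<open>grevlex_less b a\<close> obtain k l where
    "Poly_Mapping.lookup b k < Poly_Mapping.lookup a k" "\<forall>i>k. Poly_Mapping.lookup a i = Poly_Mapping.lookup b i"
    "Poly_Mapping.lookup a l < Poly_Mapping.lookup b l" "\<forall>i>l. Poly_Mapping.lookup b i = Poly_Mapping.lookup a i"
    by (auto simp: grevlex_less_iff)
  then show False
    by (cases k l rule: linorder_cases) (metis less_irrefl, simp, metis less_irrefl)
qed

lemma grevlex_less_trans:
  assumes ab: "grevlex_less a b" and bc: "grevlex_less b c"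
  shows "grevlex_less a c"
proof (cases "total_degree a < total_degree c")
  case True
  then show ?thesis
    by (simp add: grevlex_less_iff)
next
  case False
  with ab bc have deg: "total_degree a = total_degree b" "total_degree b = total_degree c"
    by (auto simp: grevlex_less_iff)
  with ab bc obtain k l where
    k: "Poly_Mapping.lookup b k < Poly_Mapping.lookup a k" "\<forall>i>k. Poly_Mapping.lookup a i = Poly_Mapping.lookup b i" and
    l: "Poly_Mapping.lookup c l < Poly_Mapping.lookup b l" "\<forall>i>l. Poly_Mapping.lookup b i = Poly_Mapping.lookup c i"
    by (auto simp: grevlex_less_iff)
  have "\<exists>m. Poly_Mapping.lookup c m < Poly_Mapping.lookup a m \<and>
      (\<forall>i>m. Poly_Mapping.lookup a i = Poly_Mapping.lookup c i)"
    using k l by (cases k l rule: linorder_cases) (intro exI; force)+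
  with deg show ?thesis
    by (simp add: grevlex_less_iff)
qed

lemma total_degree_add: "total_degree (a + b) = total_degree a + total_degree b"
  unfolding total_degree_def
  by (rule setsum_keys_plus_distrib[where f = "\<lambda>k v. v"]) (auto simp: lookup_add)

lemma total_degree_single [simp]: "total_degree (Poly_Mapping.single k n) = n"
  unfolding total_degree_def by simp

lemma grevlex_less_add_right:
  assumes "grevlex_less a b"
  shows "grevlex_less (a + r) (b + r)"
  using assms unfolding grevlex_less_iff total_degree_add lookup_add by simp

lemma leading_monomial_eqI:
  assumes "m \<in> Poly_Mapping.keys f"
    and "\<And>m'. m' \<in> Poly_Mapping.keys f \<Longrightarrow> m' \<noteq> m \<Longrightarrow> grevlex_less m' m"
  shows "leading_monomial f = m"
  unfolding leading_monomial_def
proof (rule the_equality)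
  show "m \<in> Poly_Mapping.keys f \<and> (\<forall>m'\<in>Poly_Mapping.keys f. m' \<noteq> m \<longrightarrow> grevlex_less m' m)"
    using assms by blast
  fix l
  assume "l \<in> Poly_Mapping.keys f \<and> (\<forall>m'\<in>Poly_Mapping.keys f. m' \<noteq> l \<longrightarrow> grevlex_less m' l)"
  then show "l = m"
    using assms grevlex_less_asym by metis
qed

lemma leading_term_sum_single:
  fixes c :: "'a \<Rightarrow> 'k::comm_monoid_add"
  assumes "finite P" "w \<in> P" "c w \<noteq> 0"
    and dominated: "\<And>\<sigma>. \<sigma> \<in> P \<Longrightarrow> \<sigma> \<noteq> w \<Longrightarrow> grevlex_less (m \<sigma>) (m w)"
  shows "leading_term (\<Sum>\<sigma>\<in>P. Poly_Mapping.single (m \<sigma>) (c \<sigma>)) = Poly_Mapping.single (m w) (c w)"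
proof -
  let ?f = "\<Sum>\<sigma>\<in>P. Poly_Mapping.single (m \<sigma>) (c \<sigma>)"
  have "m \<sigma> \<noteq> m w" if "\<sigma> \<in> P" "\<sigma> \<noteq> w" for \<sigma>
    using dominated[OF that] grevlex_less_irrefl by metis
  then have "Poly_Mapping.lookup ?f (m w) = (\<Sum>\<sigma>\<in>P. if \<sigma> = w then c \<sigma> else 0)"
    unfolding lookup_sum by (intro sum.cong) (auto simp: lookup_single when_def)
  then have coeff: "Poly_Mapping.lookup ?f (m w) = c w"
    using assms(1,2) by simp
  have "leading_monomial ?f = m w"
  proof (rule leading_monomial_eqI)
    show "m w \<in> Poly_Mapping.keys ?f"
      using coeff assms(3) by (simp add: in_keys_iff)
    fix m'
    assume "m' \<in> Poly_Mapping.keys ?f" "m' \<noteq> m w"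
    then obtain \<sigma> where "\<sigma> \<in> P" "m' = m \<sigma>"
      using keys_sum[of _ P] by (fastforce split: if_splits)
    with \<open>m' \<noteq> m w\<close> show "grevlex_less m' (m w)"
      using dominated by blast
  qed
  with coeff show ?thesis
    by (simp add: leading_term_def)
qed

definition evar_monomial :: "int \<Rightarrow> (nat \<Rightarrow>\<^sub>0 nat)" where
  "evar_monomial k = (if k = 0 then 0 else Poly_Mapping.single (nat k) 1)"

lemma evar_eq_single:
  "evar n k = (if 0 \<le> k \<and> k \<le> int n then Poly_Mapping.single (evar_monomial k) 1 else 0)"
  unfolding evar_def mvar_def evar_monomial_def by auto

lemma prod_evar:
  assumes "finite I"
  shows "(\<Prod>i\<in>I. evar n (f i) :: 'k::field mpoly) =
    (if \<forall>i\<in>I. 0 \<le> f i \<and> f i \<le> int n then Poly_Mapping.single (\<Sum>i\<in>I. evar_monomial (f i)) 1 else 0)"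
  using assms by (induction I rule: finite_induct) (auto simp: evar_eq_single mult_single)

lemma grevlex_less_exchange:
  fixes u v u' v' :: int
  assumes "0 \<le> u" "u < u'" "u < v'" "u' < v" "v' < v"
  shows "grevlex_less (evar_monomial u + evar_monomial v) (evar_monomial u' + evar_monomial v')"
proof (cases "u = 0")
  case True
  with assms show ?thesis
    by (simp add: grevlex_less_iff evar_monomial_def total_degree_add)
next
  case False
  let ?lhs = "evar_monomial u + evar_monomial v" and ?rhs = "evar_monomial u' + evar_monomial v'"
  have lt: "nat u < nat v" "nat u' < nat v" "nat v' < nat v"
    using assms by linarith+
  note neq = lt[THEN less_imp_neq]
  have "total_degree ?lhs = total_degree ?rhs"
    using assms False by (simp add: evar_monomial_def total_degree_add)
  moreover have "Poly_Mapping.lookup ?rhs (nat v) < Poly_Mapping.lookup ?lhs (nat v)"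
    using assms False neq by (simp add: evar_monomial_def lookup_add lookup_single when_def)
  moreover have "\<forall>i>nat v. Poly_Mapping.lookup ?lhs i = Poly_Mapping.lookup ?rhs i"
    using assms False lt by (auto simp: evar_monomial_def lookup_add lookup_single when_def)
  ultimately show ?thesis
    unfolding grevlex_less_iff by blast
qed

definition reversal :: "nat \<Rightarrow> nat \<Rightarrow> nat" where
  "reversal R = (\<lambda>i. if i < R then R - 1 - i else i)"

lemma reversal_permutes: "reversal R permutes {0..<R}"
  unfolding reversal_def
  by (rule bij_imp_permutes, rule bij_betw_byWitness[where f' = "\<lambda>i. if i < R then R - 1 - i else i"]) auto

lemma permutes_without_ascent_eq_reversal:
  assumes perm: "\<sigma> permutes {0..<R}"
    and no_ascent: "\<And>i j. i < j \<Longrightarrow> j < R \<Longrightarrow> \<not> \<sigma> i < \<sigma> j"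
  shows "\<sigma> = reversal R"
proof
  fix i
  have inj: "inj \<sigma>"
    using perm by (rule permutes_inj)
  have in_range: "\<sigma> k < R" if "k < R" for k
    using permutes_in_image[OF perm] that by simp
  have dec: "\<sigma> j < \<sigma> i" if "i < j" "j < R" for i j
    using no_ascent[OF that] inj_eq[OF inj, of i j] that by (metis less_irrefl linorder_neqE)
  show "\<sigma> i = reversal R i"
  proof (cases "i < R")
    case True
    have "\<sigma> ` {i<..<R} \<subseteq> {..<\<sigma> i}"
      using dec by auto
    from card_mono[OF _ this] have "R - 1 - i \<le> \<sigma> i"
      by (simp add: card_image inj_on_subset[OF inj])
    moreover have "\<sigma> ` {..<i} \<subseteq> {\<sigma> i<..<R}"
      using dec in_range True by auto
    from card_mono[OF _ this] have "i \<le> R - 1 - \<sigma> i"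
      by (simp add: card_image inj_on_subset[OF inj])
    ultimately show ?thesis
      using True in_range[OF True] by (simp add: reversal_def)
  next
    case False
    then show ?thesis
      using permutes_not_in[OF perm] by (simp add: reversal_def)
  qed
qed

lemma exchange_decreases_weight:
  fixes i j a b :: nat
  assumes "i < j" "a < b"
  shows "i * b + j * a < i * a + j * b"
proof -
  have "0 < (int j - int i) * (int b - int a)"
    using assms by simp
  then have "int (i * b + j * a) < int (i * a + j * b)"
    by (simp add: algebra_simps)
  then show ?thesis
    by (simp only: of_nat_less_iff)
qed

lemma sum_remove_two:
  assumes "finite S" "i \<in> S" "j \<in> S" "i \<noteq> j"
  shows "sum g S = g i + g j + sum g (S - {i, j})"
  using assms by (simp add: sum.remove[of S i] sum.remove[of "S - {i}" j] insert_commute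
    Diff_insert[symmetric] add.assoc)

locale increasing_indices =
  fixes x :: "nat \<Rightarrow> nat \<Rightarrow> int" and R :: nat
  assumes increasing_in_row: "\<And>i j k. i < j \<Longrightarrow> j < R \<Longrightarrow> k < R \<Longrightarrow> x i k < x j k"
    and increasing_in_col: "\<And>i k l. i < R \<Longrightarrow> k < l \<Longrightarrow> l < R \<Longrightarrow> x i k < x i l"
begin

definition admissible :: "nat \<Rightarrow> (nat \<Rightarrow> nat) \<Rightarrow> bool" where
  "admissible n \<sigma> \<longleftrightarrow> (\<forall>i<R. 0 \<le> x i (\<sigma> i) \<and> x i (\<sigma> i) \<le> int n)"

definition monomial_of :: "(nat \<Rightarrow> nat) \<Rightarrow> (nat \<Rightarrow>\<^sub>0 nat)" where
  "monomial_of \<sigma> = (\<Sum>i = 0..<R. evar_monomial (x i (\<sigma> i)))"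

lemma exchange_ascent:
  assumes perm: "\<sigma> permutes {0..<R}" and adm: "admissible n \<sigma>"
    and ascent: "i < j" "j < R" "\<sigma> i < \<sigma> j"
  defines "\<tau> \<equiv> \<sigma> \<circ> Transposition.transpose i j"
  shows "\<tau> permutes {0..<R}" and "admissible n \<tau>"
    and "grevlex_less (monomial_of \<sigma>) (monomial_of \<tau>)"
    and "(\<Sum>k = 0..<R. k * \<tau> k) < (\<Sum>k = 0..<R. k * \<sigma> k)"
proof -
  have \<tau>_ij: "\<tau> i = \<sigma> j" "\<tau> j = \<sigma> i" and \<tau>_other: "\<And>k. k \<noteq> i \<Longrightarrow> k \<noteq> j \<Longrightarrow> \<tau> k = \<sigma> k"
    by (simp_all add: \<tau>_def)
  show "\<tau> permutes {0..<R}"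
    unfolding \<tau>_def using ascent by (intro permutes_compose[OF permutes_swap_id perm]) auto
  have "\<sigma> i < R" "\<sigma> j < R"
    using permutes_in_image[OF perm] ascent by auto
  then have order: "x i (\<sigma> i) < x i (\<sigma> j)" "x i (\<sigma> i) < x j (\<sigma> i)"
      "x i (\<sigma> j) < x j (\<sigma> j)" "x j (\<sigma> i) < x j (\<sigma> j)"
    using ascent increasing_in_row increasing_in_col by auto
  have bounds: "0 \<le> x i (\<sigma> i)" "x j (\<sigma> j) \<le> int n"
    using adm ascent by (auto simp: admissible_def)
  show "admissible n \<tau>"
    using adm order bounds \<tau>_ij \<tau>_other unfolding admissible_def
    by (metis dual_order.strict_trans1 order.strict_implies_order order_trans)
  have S: "finite {0..<R}" "i \<in> {0..<R}" "j \<in> {0..<R}" "i \<noteq> j"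
    using ascent by auto
  have rest: "sum (\<lambda>k. g k (\<tau> k)) ({0..<R} - {i, j}) = sum (\<lambda>k. g k (\<sigma> k)) ({0..<R} - {i, j})" for g
    by (rule sum.cong) (auto simp: \<tau>_other)
  have "grevlex_less (evar_monomial (x i (\<sigma> i)) + evar_monomial (x j (\<sigma> j)))
      (evar_monomial (x i (\<sigma> j)) + evar_monomial (x j (\<sigma> i)))"
    using order bounds by (intro grevlex_less_exchange) auto
  then show "grevlex_less (monomial_of \<sigma>) (monomial_of \<tau>)"
    unfolding monomial_of_def sum_remove_two[OF S, of "\<lambda>k. evar_monomial (x k (\<sigma> k))"]
      sum_remove_two[OF S, of "\<lambda>k. evar_monomial (x k (\<tau> k))"]
      rest[of "\<lambda>k v. evar_monomial (x k v)"] \<tau>_ij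
    by (rule grevlex_less_add_right)
  show "(\<Sum>k = 0..<R. k * \<tau> k) < (\<Sum>k = 0..<R. k * \<sigma> k)"
    unfolding sum_remove_two[OF S, of "\<lambda>k. k * \<sigma> k"] sum_remove_two[OF S, of "\<lambda>k. k * \<tau> k"]
      rest[of "\<lambda>k v. k * v"] \<tau>_ij
    using exchange_decreases_weight[OF ascent(1,3)] by simp
qed

lemma reversal_dominates:
  assumes "\<sigma> permutes {0..<R}" "admissible n \<sigma>"
  shows "admissible n (reversal R) \<and>
    (\<sigma> \<noteq> reversal R \<longrightarrow> grevlex_less (monomial_of \<sigma>) (monomial_of (reversal R)))"
  using assms
proof (induction "\<Sum>k = 0..<R. k * \<sigma> k" arbitrary: \<sigma> rule: less_induct)
  case less
  show ?case
  proof (cases "\<exists>i j. i < j \<and> j < R \<and> \<sigma> i < \<sigma> j")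
    case True
    then obtain i j where ascent: "i < j" "j < R" "\<sigma> i < \<sigma> j"
      by blast
    let ?\<tau> = "\<sigma> \<circ> Transposition.transpose i j"
    note exchange = exchange_ascent[OF less.prems ascent]
    have IH: "admissible n (reversal R) \<and>
        (?\<tau> \<noteq> reversal R \<longrightarrow> grevlex_less (monomial_of ?\<tau>) (monomial_of (reversal R)))"
      by (rule less.hyps[OF exchange(4,1,2)])
    have "grevlex_less (monomial_of \<sigma>) (monomial_of (reversal R))"
    proof (cases "?\<tau> = reversal R")
      case True
      with exchange(3) show ?thesis
        by simp
    next
      case False
      with IH exchange(3) show ?thesis
        using grevlex_less_trans by blast
    qed
    with IH show ?thesis
      by blast
  next
    case False
    then have "\<sigma> = reversal R"
      using permutes_without_ascent_eq_reversal[OF less.prems(1)] by blast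
    with less.prems show ?thesis
      by simp
  qed
qed

context
  fixes B :: "'k::field mpoly mat" and n :: nat
  assumes carrier: "B \<in> carrier_mat R R"
    and entries: "\<And>i k. i < R \<Longrightarrow> k < R \<Longrightarrow> B $$ (i, k) = evar n (x i k)"
begin

lemma prod_entries:
  assumes "\<sigma> permutes {0..<R}"
  shows "(\<Prod>i = 0..<R. B $$ (i, \<sigma> i)) =
    (if admissible n \<sigma> then Poly_Mapping.single (monomial_of \<sigma>) 1 else 0)"
proof -
  have "(\<Prod>i = 0..<R. B $$ (i, \<sigma> i)) = (\<Prod>i = 0..<R. evar n (x i (\<sigma> i)))"
    using permutes_in_image[OF assms] by (intro prod.cong) (auto simp: entries)
  then show ?thesis
    by (auto simp: prod_evar admissible_def monomial_of_def)
qed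

lemma det_eq_sum_admissible:
  "det B = (\<Sum>\<sigma> | \<sigma> permutes {0..<R} \<and> admissible n \<sigma>.
     Poly_Mapping.single (monomial_of \<sigma>) (of_int (sign \<sigma>)))"
proof -
  have "det B = (\<Sum>\<sigma>\<in>{\<sigma>. \<sigma> permutes {0..<R}}. signof \<sigma> * (\<Prod>i = 0..<R. B $$ (i, \<sigma> i)))"
    by (rule det_def'[OF carrier])
  also have "\<dots> = (\<Sum>\<sigma>\<in>{\<sigma>. \<sigma> permutes {0..<R}}.
      if admissible n \<sigma> then Poly_Mapping.single (monomial_of \<sigma>) (of_int (sign \<sigma>)) else 0)"
    by (intro sum.cong) (auto simp: prod_entries mult_single simp flip: single_of_int)
  also have "\<dots> = (\<Sum>\<sigma> | \<sigma> permutes {0..<R} \<and> admissible n \<sigma>.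
      Poly_Mapping.single (monomial_of \<sigma>) (of_int (sign \<sigma>)))"
    by (simp add: sum.inter_filter[symmetric] finite_permutations)
  finally show ?thesis .
qed

lemma leading_term_det:
  assumes "det B \<noteq> 0"
  shows "leading_term (det B) = of_int (sign (reversal R)) * (\<Prod>i = 0..<R. B $$ (i, reversal R i))"
proof -
  let ?P = "{\<sigma>. \<sigma> permutes {0..<R} \<and> admissible n \<sigma>}"
  from assms have "?P \<noteq> {}"
    unfolding det_eq_sum_admissible by (metis sum.empty)
  then have reversal: "reversal R \<in> ?P" and dominated: "\<And>\<sigma>. \<sigma> \<in> ?P \<Longrightarrow> \<sigma> \<noteq> reversal R \<Longrightarrow>
      grevlex_less (monomial_of \<sigma>) (monomial_of (reversal R))"
    using reversal_dominates reversal_permutes by blast+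
  have "(of_int (sign (reversal R)) :: 'k) \<noteq> 0"
    by (simp add: sign_def)
  then have "leading_term (det B) = Poly_Mapping.single (monomial_of (reversal R)) (of_int (sign (reversal R)))"
    unfolding det_eq_sum_admissible using reversal dominated
    by (intro leading_term_sum_single) (simp_all add: finite_permutations)
  also have "\<dots> = of_int (sign (reversal R)) * (\<Prod>i = 0..<R. B $$ (i, reversal R i))"
    using reversal by (simp add: prod_entries mult_single flip: single_of_int)
  finally show ?thesis .
qed

end

end

lemma submatrix_Aprime:
  assumes "J \<subseteq> {0..<(q - 1) + (p - 1) * q}" and "card J = 2*q - 1"
  shows "submatrix (Aprime p q :: 'k::field mpoly mat) UNIV J \<in> carrier_mat (2*q - 1) (2*q - 1)"
    and "\<And>i k. i < 2*q - 1 \<Longrightarrow> k < 2*q - 1 \<Longrightarrow> submatrix (Aprime p q :: 'k mpoly mat) UNIV J $$ (i, k) =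
      evar (q * p) (int p * int (i + 1) + int (pick J k + 1) - int q * int p)"
proof -
  have cols: "{j. j < dim_col (Aprime p q :: 'k mpoly mat) \<and> j \<in> J} = J"
    and rows: "{i. i < dim_row (Aprime p q :: 'k mpoly mat) \<and> i \<in> UNIV} = {..<2*q - 1}"
    using assms(1) by (auto simp: Aprime_def)
  show "submatrix (Aprime p q :: 'k mpoly mat) UNIV J \<in> carrier_mat (2*q - 1) (2*q - 1)"
    unfolding carrier_mat_def mem_Collect_eq dim_submatrix cols rows assms(2) by simp
  fix i k
  assume ik: "i < 2*q - 1" "k < 2*q - 1"
  then have "pick J k \<in> J"
    using pick_in_set_le[of k J] assms(2) by simp
  have "submatrix (Aprime p q :: 'k mpoly mat) UNIV J $$ (i, k) = Aprime p q $$ (pick UNIV i, pick J k)"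
    using ik by (intro submatrix_index) (simp_all only: cols rows assms(2) card_lessThan)
  also have "\<dots> = evar (q * p) (int p * int (i + 1) + int (pick J k + 1) - int q * int p)"
    using ik \<open>pick J k \<in> J\<close> assms(1) by (auto simp: pick_UNIV Aprime_def)
  finally show "submatrix (Aprime p q :: 'k mpoly mat) UNIV J $$ (i, k) = \<dots>" .
qed

lemma w0_eq_reversal: "w0 q = reversal (2*q - 1)"
  by (simp add: reversal_def w0_def fun_eq_iff)

theorem proposition5p5:
  fixes p q :: nat and J :: "nat set"
  assumes "p \<ge> 3" and "q \<ge> 1"
    and "J \<subseteq> {0..<(q - 1) + (p - 1) * q}" and "card J = 2*q - 1"
    and "B = submatrix (Aprime p q :: 'k::field mpoly mat) UNIV J"
    and "det B \<noteq> 0"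
  shows "leading_term (det B) = of_int (sign (w0 q)) * (\<Prod>i = 0..<2*q - 1. B $$ (i, 2*q - 2 - i))"
proof -
  define x where "x = (\<lambda>i k. int p * int (i + 1) + int (pick J k + 1) - int q * int p)"
  interpret increasing_indices x "2*q - 1"
    using assms(1,4) pick_mono_le[of _ J] by unfold_locales (auto simp: x_def)
  have "leading_term (det B) =
      of_int (sign (reversal (2*q - 1))) * (\<Prod>i = 0..<2*q - 1. B $$ (i, reversal (2*q - 1) i))"
    using submatrix_Aprime[OF assms(3,4)] assms(5,6)
    by (intro leading_term_det[where n = "q * p"]) (auto simp: x_def)
  also have "(\<Prod>i = 0..<2*q - 1. B $$ (i, reversal (2*q - 1) i)) = (\<Prod>i = 0..<2*q - 1. B $$ (i, 2*q - 2 - i))"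
    by (rule prod.cong) (auto simp: reversal_def)
  finally show ?thesis
    unfolding w0_eq_reversal .
qed

end
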